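(* Let the rows $X_1,\dots,X_p$ of $\mathbf X\in\mathbb{R}^{p\times L}$ be i.i.d. zero-mean sub-Gaussian random vectors with sub-Gaussian constant $\overline\sigma<\infty$. Let $\theta\in\mathbb{R}^L$ with $\|\theta\|_2\le B$, $\delta>0$ and $s\ge2$. For $p\ge p_0(B,\delta,s,\overline\sigma)$, $$\mathbb P\Big\{\|\mathrm{II}_\theta-\mathbb E[\mathrm{II}_\theta]\|_2\lesssim\overline\sigma\sqrt{L+\log p}\;p^{\frac12+\delta}\Big\}\ge1-4p^{1-s},$$ where $\lesssim$ hides an absolute constant.
   Context: $\mathrm{II}_\theta=\sum_{j=1}^p e^{X_j^\top\theta}X_j\in\mathbb{R}^L$. A random vector $Z\in\mathbb{R}^L$ is zero-mean sub-Gaussian with constant $\gamma$ if $\mathbb E Z=0$ and $\mathbb E[\exp(v^\top Z)]\le\exp(\|v\|_2^2\gamma^2/2)$ for all $v\in\mathbb{R}^L$. *)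

theory Defs
  imports "HOL-Probability.Probability"
begin

text \<open>Vectors in R^L are represented as functions nat => real; only the
  coordinates i < L matter.\<close>

definition inner_L :: "nat \<Rightarrow> (nat \<Rightarrow> real) \<Rightarrow> (nat \<Rightarrow> real) \<Rightarrow> real" where
  "inner_L L u v = (\<Sum>i<L. u i * v i)"

definition norm_L :: "nat \<Rightarrow> (nat \<Rightarrow> real) \<Rightarrow> real" where
  "norm_L L u = sqrt (\<Sum>i<L. (u i)\<^sup>2)"

definition subgaussian_vec :: "nat \<Rightarrow> (nat \<Rightarrow> real) measure \<Rightarrow> real \<Rightarrow> bool" where
  "subgaussian_vec L \<mu> \<gamma> \<longleftrightarrow>
     (\<forall>i<L. integrable \<mu> (\<lambda>x. x i) \<and> (\<integral>x. x i \<partial>\<mu>) = 0) \<and>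
     (\<forall>v. integrable \<mu> (\<lambda>x. exp (inner_L L v x)) \<and>
          (\<integral>x. exp (inner_L L v x) \<partial>\<mu>) \<le> exp ((norm_L L v)\<^sup>2 * \<gamma>\<^sup>2 / 2))"

text \<open>II_theta = sum_{j<p} exp(X_j^T theta) X_j, where X j is the j-th row.\<close>
definition II :: "nat \<Rightarrow> nat \<Rightarrow> (nat \<Rightarrow> real) \<Rightarrow> (nat \<Rightarrow> nat \<Rightarrow> real) \<Rightarrow> (nat \<Rightarrow> real)" where
  "II L p \<theta> X = (\<lambda>i. \<Sum>j<p. exp (inner_L L (X j) \<theta>) * X j i)"

definition rows_space :: "nat \<Rightarrow> (nat \<Rightarrow> real) measure \<Rightarrow> (nat \<Rightarrow> nat \<Rightarrow> real) measure" where
  "rows_space p \<mu> = PiM {..<p} (\<lambda>_. \<mu>)"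

definition EII :: "nat \<Rightarrow> nat \<Rightarrow> (nat \<Rightarrow> real) \<Rightarrow> (nat \<Rightarrow> real) measure \<Rightarrow> (nat \<Rightarrow> real)" where
  "EII L p \<theta> \<mu> = (\<lambda>i. \<integral>X. II L p \<theta> X i \<partial>(rows_space p \<mu>))"

end

theory Submission
  imports Defs
begin

(* The i-th coordinate of II_theta - E II_theta is a sum S_i of p i.i.d. centred copies of
   Y = exp <X,theta> X_i - E [exp <X,theta> X_i].  Since |x|^n <= n! (e^x + e^-x), the n-th
   absolute moment of exp <X,theta> X_i is controlled by the moment generating function of X at
   n theta +- e_i, so sub-Gaussianity bounds every moment of Y of order at most 2k by a constant M
   depending only on B, sigma and k.  In the expansion of S_i^(2k), a monomial in which some row
   occurs exactly once has mean zero, and every other monomial involves at most k distinct rows;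
   hence E S_i^(2k) <= k^(2k) p^k M^k.  Markov's inequality for
   |S|^(2k) <= L^(k-1) sum_i S_i^(2k) bounds the failure probability at level
   t = sigma sqrt (L + ln p) p^(1/2 + delta) by k^(2k) M^k sigma^(-2k) p^(-2 delta k), which is at
   most p^(1-s) as soon as 2 delta k >= s and p >= k^(2k) M^k sigma^(-2k).  So C = 1 works, all
   constants being absorbed into p0. *)

lemma abs_power_le_fact_mult_exp:
  fixes x :: real
  shows "\<bar>x\<bar> ^ n \<le> fact n * (exp x + exp (- x))"
proof -
  have series: "(\<lambda>m. \<bar>x\<bar> ^ m /\<^sub>R fact m) sums exp \<bar>x\<bar>" by (rule exp_converges)
  have "(\<Sum>m\<in>{n}. \<bar>x\<bar> ^ m /\<^sub>R fact m) \<le> (\<Sum>m. \<bar>x\<bar> ^ m /\<^sub>R fact m)"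
    by (rule sum_le_suminf) (use series in \<open>auto simp: sums_iff\<close>)
  then have "\<bar>x\<bar> ^ n / fact n \<le> exp \<bar>x\<bar>"
    using series by (simp add: sums_iff divide_inverse mult.commute)
  then have "\<bar>x\<bar> ^ n \<le> fact n * exp \<bar>x\<bar>" by (simp add: divide_le_eq mult.commute)
  also have "exp \<bar>x\<bar> \<le> exp x + exp (- x)" by (cases "x \<ge> 0") auto
  finally show ?thesis by simp
qed

lemma add_power_le_pow2_mult:
  fixes a b :: real
  assumes "0 \<le> a" "0 \<le> b"
  shows "(a + b) ^ n \<le> 2 ^ n * (a ^ n + b ^ n)"
proof -
  have "(a + b) ^ n \<le> (2 * max a b) ^ n" using assms by (intro power_mono) auto
  also have "\<dots> = 2 ^ n * max a b ^ n" by (simp add: power_mult_distrib)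
  also have "max a b ^ n \<le> a ^ n + b ^ n" using assms by (cases "a \<le> b") (auto simp: max_def)
  finally show ?thesis by simp
qed

lemma sum_power_le_card_power_mult_sum:
  fixes a :: "'i \<Rightarrow> real"
  assumes "finite I" "\<And>i. i \<in> I \<Longrightarrow> 0 \<le> a i" "1 \<le> k"
  shows "(\<Sum>i\<in>I. a i) ^ k \<le> real (card I) ^ (k - 1) * (\<Sum>i\<in>I. a i ^ k)"
proof (cases "I = {}")
  case True
  then show ?thesis using assms by (simp add: power_0_left)
next
  case False
  define c where "c = real (card I)"
  have c: "0 < c" using False assms unfolding c_def by auto
  have convex: "convex_on {0::real..} (\<lambda>x. x ^ k)"
    by (cases "even k") (auto intro: convex_power_odd convex_on_subset[OF convex_power_even])
  have "(\<Sum>i\<in>I. (1 / c) *\<^sub>R a i) ^ k \<le> (\<Sum>i\<in>I. (1 / c) * a i ^ k)"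
    using convex_on_sum[OF assms(1) False convex, of "\<lambda>_. 1 / c" a] c assms(2)
    by (simp add: c_def)
  then have "((\<Sum>i\<in>I. a i) / c) ^ k \<le> (\<Sum>i\<in>I. a i ^ k) / c"
    by (simp add: sum_divide_distrib[symmetric])
  then have "(\<Sum>i\<in>I. a i) ^ k \<le> (\<Sum>i\<in>I. a i ^ k) / c * c ^ k"
    using c by (simp add: power_divide divide_le_eq)
  also have "\<dots> = c ^ (k - 1) * (\<Sum>i\<in>I. a i ^ k)"
    using c assms(3) by (cases k) (auto simp: field_simps)
  finally show ?thesis unfolding c_def .
qed

definition fiber_card :: "nat \<Rightarrow> (nat \<Rightarrow> 'a) \<Rightarrow> 'a \<Rightarrow> nat" where
  "fiber_card n f j = card {l. l < n \<and> f l = j}"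

lemma fiber_card_le: "fiber_card n f j \<le> n"
proof -
  have "fiber_card n f j \<le> card {..<n}" unfolding fiber_card_def by (rule card_mono) auto
  then show ?thesis by simp
qed

lemma fiber_card_eq_0_iff: "fiber_card n f j = 0 \<longleftrightarrow> j \<notin> f ` {..<n}"
  unfolding fiber_card_def by (auto simp: card_eq_0_iff)

lemma prod_comp_eq_prod_power_fiber_card:
  fixes h :: "'a \<Rightarrow> 'b::comm_monoid_mult"
  assumes "finite J" "f ` {..<n} \<subseteq> J"
  shows "(\<Prod>l<n. h (f l)) = (\<Prod>j\<in>J. h j ^ fiber_card n f j)"
proof -
  have "(\<Prod>l<n. h (f l)) = (\<Prod>j\<in>J. \<Prod>l\<in>{l \<in> {..<n}. f l = j}. h (f l))"
    using assms by (intro prod.group[symmetric]) auto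
  also have "\<dots> = (\<Prod>j\<in>J. \<Prod>l\<in>{l \<in> {..<n}. f l = j}. h j)"
    by (intro prod.cong refl) auto
  finally show ?thesis by (simp add: fiber_card_def)
qed

lemma power_sum_eq_sum_PiE_prod_power:
  fixes y :: "'a \<Rightarrow> 'b::comm_semiring_1"
  assumes "finite J"
  shows "(\<Sum>j\<in>J. y j) ^ n = (\<Sum>f\<in>PiE {..<n} (\<lambda>_. J). \<Prod>j\<in>J. y j ^ fiber_card n f j)"
proof -
  have "(\<Sum>j\<in>J. y j) ^ n = (\<Prod>l<n. \<Sum>j\<in>J. y j)" by simp
  also have "\<dots> = (\<Sum>f\<in>PiE {..<n} (\<lambda>_. J). \<Prod>l<n. y (f l))"
    by (rule prod_sum_PiE) (use assms in auto)
  also have "\<dots> = (\<Sum>f\<in>PiE {..<n} (\<lambda>_. J). \<Prod>j\<in>J. y j ^ fiber_card n f j)"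
    using assms by (intro sum.cong refl prod_comp_eq_prod_power_fiber_card) auto
  finally show ?thesis .
qed

lemma two_mult_card_image_le_if_no_singleton_fiber:
  assumes "\<And>j. fiber_card n f j \<noteq> 1"
  shows "2 * card (f ` {..<n}) \<le> n"
proof -
  have "n = (\<Sum>j\<in>f ` {..<n}. fiber_card n f j)"
    using sum.group[of "{..<n}" "f ` {..<n}" f "\<lambda>_. 1::nat"] by (simp add: fiber_card_def)
  also have "\<dots> \<ge> (\<Sum>j\<in>f ` {..<n}. 2)"
  proof (intro sum_mono)
    fix j assume "j \<in> f ` {..<n}"
    then have "fiber_card n f j \<noteq> 0" by (simp add: fiber_card_eq_0_iff)
    with assms[of j] show "2 \<le> fiber_card n f j" by linarith
  qed
  finally show ?thesis by (simp add: mult.commute)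
qed

lemma PiE_factor_through_card_image:
  fixes n :: nat
  assumes f: "f \<in> PiE {..<n} (\<lambda>_. {..<p::nat})" and card_le: "card (f ` {..<n}) \<le> k"
    and p: "0 < p"
  obtains g h where "g \<in> PiE {..<n} (\<lambda>_. {..<k})" and "h \<in> PiE {..<k} (\<lambda>_. {..<p})"
    and "f = restrict (\<lambda>l. h (g l)) {..<n}"
proof -
  let ?S = "f ` {..<n}"
  obtain e where e: "bij_betw e ?S {..<card ?S}"
    using ex_bij_betw_finite_nat[of ?S] by (auto simp: atLeast0LessThan)
  define g where "g = restrict (\<lambda>l. e (f l)) {..<n}"
  define h where "h = restrict (\<lambda>m. if m < card ?S then the_inv_into ?S e m else 0) {..<k}"
  have e_less: "e (f l) < card ?S" if "l < n" for l
    using e that by (auto simp: bij_betw_def)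
  then have "e (f l) < k" if "l < n" for l using that card_le by (meson order_less_le_trans)
  then have "g \<in> PiE {..<n} (\<lambda>_. {..<k})" unfolding g_def by auto
  moreover have "the_inv_into ?S e m \<in> ?S" if "m < card ?S" for m
    using e that by (auto intro!: the_inv_into_into simp: bij_betw_def)
  then have "the_inv_into ?S e m < p" if "m < card ?S" for m
    using that f by (force simp: PiE_iff)
  then have "h \<in> PiE {..<k} (\<lambda>_. {..<p})" unfolding h_def using p by auto
  moreover have "f = restrict (\<lambda>l. h (g l)) {..<n}"
  proof
    fix l show "f l = restrict (\<lambda>l. h (g l)) {..<n} l"
    proof (cases "l < n")
      case True
      have "the_inv_into ?S e (e (f l)) = f l"
        using e True by (intro the_inv_into_f_f) (auto simp: bij_betw_def)
      then show ?thesis using True e_less[OF True] card_le unfolding g_def h_def by auto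
    next
      case False
      then show ?thesis using f by (auto simp: PiE_def extensional_def)
    qed
  qed
  ultimately show ?thesis by (rule that)
qed

lemma card_PiE_card_image_le:
  assumes "0 < p"
  shows "card {f \<in> PiE {..<n} (\<lambda>_. {..<p}). card (f ` {..<n}) \<le> k} \<le> k ^ n * p ^ k"
proof -
  let ?G = "PiE {..<n} (\<lambda>_. {..<k})" and ?H = "PiE {..<k} (\<lambda>_. {..<p})"
  let ?F = "\<lambda>(g, h). restrict (\<lambda>l. h (g l)) {..<n}"
  have "{f \<in> PiE {..<n} (\<lambda>_. {..<p}). card (f ` {..<n}) \<le> k} \<subseteq> ?F ` (?G \<times> ?H)"
  proof safe
    fix f assume "f \<in> PiE {..<n} (\<lambda>_. {..<p})" "card (f ` {..<n}) \<le> k"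
    then obtain g h where "g \<in> ?G" "h \<in> ?H" "f = ?F (g, h)"
      using PiE_factor_through_card_image assms by (metis case_prod_conv)
    then show "f \<in> ?F ` (?G \<times> ?H)" by blast
  qed
  then have "card {f \<in> PiE {..<n} (\<lambda>_. {..<p}). card (f ` {..<n}) \<le> k} \<le> card (?F ` (?G \<times> ?H))"
    by (intro card_mono) (auto intro!: finite_imageI finite_PiE)
  also have "\<dots> \<le> card (?G \<times> ?H)" by (rule card_image_le) (auto intro!: finite_PiE)
  also have "\<dots> = k ^ n * p ^ k" by (simp add: card_cartesian_product card_PiE)
  finally show ?thesis .
qed

lemma prod_moments_fiber_card_le:
  fixes m :: "nat \<Rightarrow> real" and p :: nat
  assumes f: "f \<in> PiE {..<2*k} (\<lambda>_. {..<p})"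
    and m0: "m 0 = 1" and m1: "m 1 = 0"
    and m_le: "\<And>r. r \<le> 2*k \<Longrightarrow> \<bar>m r\<bar> \<le> M" and M: "1 \<le> M"
  shows "(\<Prod>j<p. m (fiber_card (2*k) f j)) \<le> (if card (f ` {..<2*k}) \<le> k then M ^ k else 0)"
proof (cases "\<exists>j<p. fiber_card (2*k) f j = 1")
  case True
  then obtain j where "j < p" "fiber_card (2*k) f j = 1" by blast
  then have zero: "(\<Prod>j<p. m (fiber_card (2*k) f j)) = 0"
    using m1 by (intro prod_zero bexI[of _ j]) auto
  show ?thesis unfolding zero using M by simp
next
  case False
  have image: "f ` {..<2*k} \<subseteq> {..<p}" using f by auto
  have "fiber_card (2*k) f j \<noteq> 1" for j
    using False image fiber_card_eq_0_iff[of "2*k" f j] by (cases "j < p") auto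
  then have card_le: "card (f ` {..<2*k}) \<le> k"
    using two_mult_card_image_le_if_no_singleton_fiber[of "2*k" f] by simp
  have "(\<Prod>j<p. m (fiber_card (2*k) f j)) \<le> (\<Prod>j<p. \<bar>m (fiber_card (2*k) f j)\<bar>)"
    by (simp add: abs_prod[symmetric])
  also have "\<dots> \<le> (\<Prod>j<p. if j \<in> f ` {..<2*k} then M else 1)"
    using m_le[OF fiber_card_le] m0
    by (intro prod_mono) (auto simp: fiber_card_eq_0_iff[symmetric])
  also have "\<dots> = M ^ card (f ` {..<2*k})"
    using image by (simp add: prod.If_cases Int_absorb1)
  also have "\<dots> \<le> M ^ k" using card_le M by (intro power_increasing)
  finally show ?thesis using card_le by simp
qed

lemma (in prob_space) sum_iid_even_moment_le:
  fixes Y :: "'a \<Rightarrow> real"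
  assumes p: "0 < p"
    and int: "\<And>r. r \<le> 2*k \<Longrightarrow> integrable M (\<lambda>x. Y x ^ r)"
    and mean: "expectation Y = 0"
    and moment_le: "\<And>r. r \<le> 2*k \<Longrightarrow> \<bar>expectation (\<lambda>x. Y x ^ r)\<bar> \<le> Mb" and Mb: "1 \<le> Mb"
  shows "integrable (PiM {..<p} (\<lambda>_. M)) (\<lambda>X. (\<Sum>j<p. Y (X j)) ^ (2*k))"
    and "(\<integral>X. (\<Sum>j<p. Y (X j)) ^ (2*k) \<partial>PiM {..<p} (\<lambda>_. M)) \<le> real k ^ (2*k) * real p ^ k * Mb ^ k"
proof -
  interpret P: product_prob_space "\<lambda>_. M" "{..<p}"
    by (intro product_prob_spaceI prob_space_axioms)
  define Fs where "Fs = PiE {..<2*k} (\<lambda>_. {..<p})"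
  define monomial where "monomial f X = (\<Prod>j<p. Y (X j) ^ fiber_card (2*k) f j)" for f X
  have expand: "(\<lambda>X. (\<Sum>j<p. Y (X j)) ^ (2*k)) = (\<lambda>X. \<Sum>f\<in>Fs. monomial f X)"
    unfolding Fs_def monomial_def by (intro ext power_sum_eq_sum_PiE_prod_power) simp
  have monomial_int: "integrable (PiM {..<p} (\<lambda>_. M)) (monomial f)" for f
    unfolding monomial_def by (rule P.product_integrable_prod) (auto intro: int fiber_card_le)
  have monomial_integral: "(\<integral>X. monomial f X \<partial>PiM {..<p} (\<lambda>_. M))
      = (\<Prod>j<p. expectation (\<lambda>x. Y x ^ fiber_card (2*k) f j))" for f
    unfolding monomial_def by (rule P.product_integral_prod) (auto intro: int fiber_card_le)
  show "integrable (PiM {..<p} (\<lambda>_. M)) (\<lambda>X. (\<Sum>j<p. Y (X j)) ^ (2*k))"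
    unfolding expand using monomial_int by auto
  have "(\<integral>X. (\<Sum>j<p. Y (X j)) ^ (2*k) \<partial>PiM {..<p} (\<lambda>_. M))
      = (\<Sum>f\<in>Fs. \<Prod>j<p. expectation (\<lambda>x. Y x ^ fiber_card (2*k) f j))"
    unfolding expand using monomial_int by (simp add: monomial_integral)
  also have "\<dots> \<le> (\<Sum>f\<in>Fs. if card (f ` {..<2*k}) \<le> k then Mb ^ k else 0)"
    using mean moment_le Mb
    by (intro sum_mono prod_moments_fiber_card_le[where m = "\<lambda>r. expectation (\<lambda>x. Y x ^ r)"])
       (auto simp: Fs_def prob_space)
  also have "\<dots> = real (card {f \<in> Fs. card (f ` {..<2*k}) \<le> k}) * Mb ^ k"
    by (simp add: Fs_def finite_PiE sum.inter_filter[symmetric])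
  also have "\<dots> \<le> real (k ^ (2*k) * p ^ k) * Mb ^ k"
    using card_PiE_card_image_le[OF p, of "2*k" k] Mb unfolding Fs_def
    by (intro mult_right_mono) (auto simp del: of_nat_mult of_nat_power)
  finally show "(\<integral>X. (\<Sum>j<p. Y (X j)) ^ (2*k) \<partial>PiM {..<p} (\<lambda>_. M)) \<le> real k ^ (2*k) * real p ^ k * Mb ^ k"
    by simp
qed

lemma norm_L_eq_L2_set: "norm_L L u = L2_set u {..<L}"
  unfolding norm_L_def L2_set_def ..

lemma inner_L_add_coordinate:
  assumes "i < L"
  shows "inner_L L (\<lambda>l. a * \<theta> l + (if l = i then b else 0)) x = a * inner_L L x \<theta> + b * x i"
proof -
  have "(a * \<theta> l + (if l = i then b else 0)) * x l = a * (x l * \<theta> l) + (if l = i then b * x l else 0)"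
    for l by (simp add: algebra_simps)
  then show ?thesis using assms by (simp add: inner_L_def sum.distrib sum_distrib_left)
qed

lemma norm_L_add_coordinate_le:
  assumes "i < L"
  shows "norm_L L (\<lambda>l. a * \<theta> l + (if l = i then b else 0)) \<le> \<bar>a\<bar> * norm_L L \<theta> + \<bar>b\<bar>"
proof -
  have "L2_set (\<lambda>l. a * \<theta> l) {..<L} = \<bar>a\<bar> * L2_set \<theta> {..<L}"
    by (simp add: L2_set_def power_mult_distrib real_sqrt_mult sum_distrib_left[symmetric])
  moreover have "(\<Sum>l<L. (if l = i then b else 0)\<^sup>2) = (\<Sum>l<L. if l = i then b\<^sup>2 else 0)"
    by (intro sum.cong) auto
  then have "L2_set (\<lambda>l. if l = i then b else 0) {..<L} = \<bar>b\<bar>"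
    using assms by (simp add: L2_set_def)
  ultimately show ?thesis
    using L2_set_triangle_ineq[of "\<lambda>l. a * \<theta> l" "\<lambda>l. if l = i then b else 0" "{..<L}"]
    by (simp add: norm_L_eq_L2_set)
qed

lemma subgaussian_vec_mgf_le:
  assumes "subgaussian_vec L \<mu> \<sigma>" and "norm_L L v \<le> r"
  shows "integrable \<mu> (\<lambda>x. exp (inner_L L v x))"
    and "(\<integral>x. exp (inner_L L v x) \<partial>\<mu>) \<le> exp (r\<^sup>2 * \<sigma>\<^sup>2 / 2)"
proof -
  show "integrable \<mu> (\<lambda>x. exp (inner_L L v x))"
    using assms(1) unfolding subgaussian_vec_def by blast
  have "(norm_L L v)\<^sup>2 \<le> r\<^sup>2"
    using assms(2) by (intro power_mono) (auto simp: norm_L_eq_L2_set)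
  then have "exp ((norm_L L v)\<^sup>2 * \<sigma>\<^sup>2 / 2) \<le> exp (r\<^sup>2 * \<sigma>\<^sup>2 / 2)"
    by (simp add: divide_right_mono mult_right_mono)
  then show "(\<integral>x. exp (inner_L L v x) \<partial>\<mu>) \<le> exp (r\<^sup>2 * \<sigma>\<^sup>2 / 2)"
    using assms(1) unfolding subgaussian_vec_def by (meson order_trans)
qed

lemma subgaussian_vec_measurable_coordinate:
  assumes "subgaussian_vec L \<mu> \<sigma>" "l < L"
  shows "(\<lambda>x. x l) \<in> borel_measurable \<mu>"
  using assms unfolding subgaussian_vec_def by (auto intro: borel_measurable_integrable)

lemma subgaussian_vec_measurable_inner:
  assumes "subgaussian_vec L \<mu> \<sigma>"
  shows "(\<lambda>x. inner_L L x \<theta>) \<in> borel_measurable \<mu>"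
  unfolding inner_L_def
  by (intro borel_measurable_sum borel_measurable_times subgaussian_vec_measurable_coordinate[OF assms])
     auto

definition abs_moment_bound :: "real \<Rightarrow> real \<Rightarrow> nat \<Rightarrow> real" where
  "abs_moment_bound B \<sigma> n = 2 * fact n * exp ((real n * B + 1)\<^sup>2 * \<sigma>\<^sup>2 / 2)"

lemma subgaussian_vec_abs_moment_le:
  assumes sg: "subgaussian_vec L \<mu> \<sigma>" and \<theta>: "norm_L L \<theta> \<le> B" and i: "i < L"
  shows "integrable \<mu> (\<lambda>x. \<bar>exp (inner_L L x \<theta>) * x i\<bar> ^ n)"
    and "(\<integral>x. \<bar>exp (inner_L L x \<theta>) * x i\<bar> ^ n \<partial>\<mu>) \<le> abs_moment_bound B \<sigma> n"
proof -
  define v where "v b = (\<lambda>l. real n * \<theta> l + (if l = i then b else 0))" for b :: real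
  define bound where "bound x = fact n * (exp (inner_L L (v 1) x) + exp (inner_L L (v (-1)) x))" for x
  have norm_v: "norm_L L (v b) \<le> real n * B + 1" if "\<bar>b\<bar> = 1" for b
    using norm_L_add_coordinate_le[OF i, of "real n" \<theta> b] \<theta> that unfolding v_def
    by (smt (verit) mult_left_mono of_nat_0_le_iff)
  note mgf = subgaussian_vec_mgf_le[OF sg norm_v]
  have le_bound: "\<bar>exp (inner_L L x \<theta>) * x i\<bar> ^ n \<le> bound x" for x
  proof -
    have "\<bar>exp (inner_L L x \<theta>) * x i\<bar> ^ n = exp (inner_L L x \<theta>) ^ n * \<bar>x i\<bar> ^ n"
      by (simp add: abs_mult power_mult_distrib)
    also have "\<dots> \<le> exp (inner_L L x \<theta>) ^ n * (fact n * (exp (x i) + exp (- x i)))"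
      by (intro mult_left_mono abs_power_le_fact_mult_exp) auto
    also have "\<dots> = bound x"
      unfolding bound_def v_def inner_L_add_coordinate[OF i]
      by (simp add: exp_of_nat_mult[symmetric] exp_add exp_diff exp_minus field_simps)
    finally show ?thesis .
  qed
  have bound_int: "integrable \<mu> bound"
    unfolding bound_def using mgf(1) by simp
  have "(\<lambda>x. \<bar>exp (inner_L L x \<theta>) * x i\<bar> ^ n) \<in> borel_measurable \<mu>"
    using subgaussian_vec_measurable_inner[OF sg] subgaussian_vec_measurable_coordinate[OF sg i]
    by measurable
  then show int: "integrable \<mu> (\<lambda>x. \<bar>exp (inner_L L x \<theta>) * x i\<bar> ^ n)"
    by (rule Bochner_Integration.integrable_bound[OF bound_int])
       (auto intro: order_trans[OF le_bound abs_ge_self])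
  have "(\<integral>x. \<bar>exp (inner_L L x \<theta>) * x i\<bar> ^ n \<partial>\<mu>) \<le> (\<integral>x. bound x \<partial>\<mu>)"
    by (intro integral_mono int bound_int le_bound)
  also have "\<dots> \<le> fact n * (exp ((real n * B + 1)\<^sup>2 * \<sigma>\<^sup>2 / 2) + exp ((real n * B + 1)\<^sup>2 * \<sigma>\<^sup>2 / 2))"
    unfolding bound_def using mgf[of 1] mgf[of "-1"] by (simp add: add_mono)
  also have "\<dots> = abs_moment_bound B \<sigma> n" by (simp add: abs_moment_bound_def)
  finally show "(\<integral>x. \<bar>exp (inner_L L x \<theta>) * x i\<bar> ^ n \<partial>\<mu>) \<le> abs_moment_bound B \<sigma> n" .
qed

lemma subgaussian_vec_integrable_weighted_coordinate:
  assumes sg: "subgaussian_vec L \<mu> \<sigma>" and "norm_L L \<theta> \<le> B" and i: "i < L"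
  shows "integrable \<mu> (\<lambda>x. exp (inner_L L x \<theta>) * x i)"
proof -
  have "(\<lambda>x. exp (inner_L L x \<theta>) * x i) \<in> borel_measurable \<mu>"
    using subgaussian_vec_measurable_inner[OF sg] subgaussian_vec_measurable_coordinate[OF sg i]
    by measurable
  then show ?thesis
    using subgaussian_vec_abs_moment_le(1)[OF assms, of 1] by (simp add: integrable_abs_iff)
qed

lemma (in prob_space) centered_moment_le:
  fixes A :: "'a \<Rightarrow> real"
  assumes A: "A \<in> borel_measurable M"
    and int1: "integrable M (\<lambda>x. \<bar>A x\<bar>)" and le1: "expectation (\<lambda>x. \<bar>A x\<bar>) \<le> c1"
    and intn: "integrable M (\<lambda>x. \<bar>A x\<bar> ^ n)" and len: "expectation (\<lambda>x. \<bar>A x\<bar> ^ n) \<le> cn"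
  shows "integrable M (\<lambda>x. (A x - expectation A) ^ n)"
    and "\<bar>expectation (\<lambda>x. (A x - expectation A) ^ n)\<bar> \<le> 2 ^ n * (cn + c1 ^ n)"
proof -
  define m where "m = expectation A"
  have m: "\<bar>m\<bar> \<le> c1"
    unfolding m_def using integral_abs_bound[of M A] le1 by linarith
  define g where "g x = 2 ^ n * (\<bar>A x\<bar> ^ n + c1 ^ n)" for x
  have g_int: "integrable M g" unfolding g_def using intn by simp
  have le_g: "\<bar>(A x - m) ^ n\<bar> \<le> g x" for x
  proof -
    have "\<bar>(A x - m) ^ n\<bar> \<le> (\<bar>A x\<bar> + \<bar>m\<bar>) ^ n"
      unfolding power_abs by (intro power_mono) auto
    also have "\<dots> \<le> 2 ^ n * (\<bar>A x\<bar> ^ n + \<bar>m\<bar> ^ n)" by (rule add_power_le_pow2_mult) auto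
    also have "\<dots> \<le> g x" unfolding g_def using m
      by (intro mult_left_mono add_left_mono power_mono) auto
    finally show ?thesis .
  qed
  have "(\<lambda>x. (A x - m) ^ n) \<in> borel_measurable M" using A by measurable
  then show int: "integrable M (\<lambda>x. (A x - expectation A) ^ n)"
    unfolding m_def[symmetric]
    by (rule Bochner_Integration.integrable_bound[OF g_int])
       (auto intro: order_trans[OF le_g abs_ge_self])
  have "\<bar>expectation (\<lambda>x. (A x - m) ^ n)\<bar> \<le> expectation (\<lambda>x. \<bar>(A x - m) ^ n\<bar>)"
    by (rule integral_abs_bound)
  also have "\<dots> \<le> expectation g"
    using int le_g g_int unfolding m_def by (intro integral_mono) auto
  also have "\<dots> \<le> 2 ^ n * (cn + c1 ^ n)"
    unfolding g_def using intn len by (simp add: prob_space)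
  finally show "\<bar>expectation (\<lambda>x. (A x - expectation A) ^ n)\<bar> \<le> 2 ^ n * (cn + c1 ^ n)"
    unfolding m_def .
qed

definition centered_moments_bound :: "real \<Rightarrow> real \<Rightarrow> nat \<Rightarrow> real" where
  "centered_moments_bound B \<sigma> N =
     1 + (\<Sum>n\<le>N. 2 ^ n * (abs_moment_bound B \<sigma> n + abs_moment_bound B \<sigma> 1 ^ n))"

lemma one_le_centered_moments_bound: "1 \<le> centered_moments_bound B \<sigma> N"
  unfolding centered_moments_bound_def abs_moment_bound_def
  by (simp add: sum_nonneg)

lemma subgaussian_vec_centered_moment_le:
  assumes "prob_space \<mu>" and sg: "subgaussian_vec L \<mu> \<sigma>" and \<theta>: "norm_L L \<theta> \<le> B"
    and i: "i < L" and n: "n \<le> N"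
  shows "integrable \<mu> (\<lambda>x. (exp (inner_L L x \<theta>) * x i - (\<integral>y. exp (inner_L L y \<theta>) * y i \<partial>\<mu>)) ^ n)"
    and "\<bar>\<integral>x. (exp (inner_L L x \<theta>) * x i - (\<integral>y. exp (inner_L L y \<theta>) * y i \<partial>\<mu>)) ^ n \<partial>\<mu>\<bar>
           \<le> centered_moments_bound B \<sigma> N"
proof -
  interpret prob_space \<mu> by fact
  define A where "A x = exp (inner_L L x \<theta>) * x i" for x
  have "A \<in> borel_measurable \<mu>"
    unfolding A_def
    using subgaussian_vec_measurable_inner[OF sg] subgaussian_vec_measurable_coordinate[OF sg i]
    by measurable
  moreover have "integrable \<mu> (\<lambda>x. \<bar>A x\<bar>)" "expectation (\<lambda>x. \<bar>A x\<bar>) \<le> abs_moment_bound B \<sigma> 1"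
    using subgaussian_vec_abs_moment_le[OF sg \<theta> i, of 1] unfolding A_def by simp_all
  moreover have "integrable \<mu> (\<lambda>x. \<bar>A x\<bar> ^ n)" "expectation (\<lambda>x. \<bar>A x\<bar> ^ n) \<le> abs_moment_bound B \<sigma> n"
    using subgaussian_vec_abs_moment_le[OF sg \<theta> i, of n] unfolding A_def by simp_all
  ultimately have int: "integrable \<mu> (\<lambda>x. (A x - expectation A) ^ n)"
    and le: "\<bar>expectation (\<lambda>x. (A x - expectation A) ^ n)\<bar>
               \<le> 2 ^ n * (abs_moment_bound B \<sigma> n + abs_moment_bound B \<sigma> 1 ^ n)"
    by (rule centered_moment_le)+
  have "2 ^ n * (abs_moment_bound B \<sigma> n + abs_moment_bound B \<sigma> 1 ^ n)
      \<le> (\<Sum>n\<le>N. 2 ^ n * (abs_moment_bound B \<sigma> n + abs_moment_bound B \<sigma> 1 ^ n))"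
    using n by (intro member_le_sum) (auto simp: abs_moment_bound_def)
  with le have "\<bar>expectation (\<lambda>x. (A x - expectation A) ^ n)\<bar> \<le> centered_moments_bound B \<sigma> N"
    unfolding centered_moments_bound_def by linarith
  with int show "integrable \<mu> (\<lambda>x. (exp (inner_L L x \<theta>) * x i - (\<integral>y. exp (inner_L L y \<theta>) * y i \<partial>\<mu>)) ^ n)"
    and "\<bar>\<integral>x. (exp (inner_L L x \<theta>) * x i - (\<integral>y. exp (inner_L L y \<theta>) * y i \<partial>\<mu>)) ^ n \<partial>\<mu>\<bar>
           \<le> centered_moments_bound B \<sigma> N"
    unfolding A_def by simp_all
qed

lemma (in prob_space) sum_squares_power_moment_le:
  fixes S :: "nat \<Rightarrow> 'a \<Rightarrow> real"
  assumes meas: "\<And>i. i < L \<Longrightarrow> S i \<in> borel_measurable M"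
    and int: "\<And>i. i < L \<Longrightarrow> integrable M (\<lambda>x. S i x ^ (2*k))"
    and moment: "\<And>i. i < L \<Longrightarrow> expectation (\<lambda>x. S i x ^ (2*k)) \<le> c"
    and k: "1 \<le> k"
  shows "integrable M (\<lambda>x. (\<Sum>i<L. (S i x)\<^sup>2) ^ k)"
    and "expectation (\<lambda>x. (\<Sum>i<L. (S i x)\<^sup>2) ^ k) \<le> real L ^ k * c"
proof -
  define q where "q x = (\<Sum>i<L. (S i x)\<^sup>2)" for x
  define R where "R x = real L ^ (k - 1) * (\<Sum>i<L. S i x ^ (2*k))" for x
  have le_R: "q x ^ k \<le> R x" for x
    using sum_power_le_card_power_mult_sum[of "{..<L}" "\<lambda>i. (S i x)\<^sup>2" k] k
    unfolding q_def R_def by (simp add: power_mult)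
  have abs_le: "\<bar>q x ^ k\<bar> \<le> \<bar>R x\<bar>" for x
    using le_R[of x] unfolding q_def by (simp add: sum_nonneg)
  have R_int: "integrable M R" unfolding R_def using int by auto
  have "(\<lambda>x. q x ^ k) \<in> borel_measurable M"
    unfolding q_def by (intro borel_measurable_power borel_measurable_sum meas) auto
  then have int_q: "integrable M (\<lambda>x. q x ^ k)"
    by (rule Bochner_Integration.integrable_bound[OF R_int]) (use abs_le in auto)
  then show "integrable M (\<lambda>x. (\<Sum>i<L. (S i x)\<^sup>2) ^ k)" unfolding q_def .
  have "expectation (\<lambda>x. q x ^ k) \<le> expectation R"
    by (intro integral_mono int_q R_int le_R)
  also have "\<dots> = real L ^ (k - 1) * (\<Sum>i<L. expectation (\<lambda>x. S i x ^ (2*k)))"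
    unfolding R_def using int by simp
  also have "\<dots> \<le> real L ^ (k - 1) * (\<Sum>i<L. c)"
    by (intro mult_left_mono sum_mono moment) auto
  also have "\<dots> = real L ^ k * c"
    using k by (cases k) (auto simp: algebra_simps)
  finally show "expectation (\<lambda>x. (\<Sum>i<L. (S i x)\<^sup>2) ^ k) \<le> real L ^ k * c" unfolding q_def .
qed

lemma (in prob_space) prob_sqrt_sum_squares_le_ge:
  fixes S :: "nat \<Rightarrow> 'a \<Rightarrow> real"
  assumes meas: "\<And>i. i < L \<Longrightarrow> S i \<in> borel_measurable M"
    and int: "\<And>i. i < L \<Longrightarrow> integrable M (\<lambda>x. S i x ^ (2*k))"
    and moment: "\<And>i. i < L \<Longrightarrow> expectation (\<lambda>x. S i x ^ (2*k)) \<le> c"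
    and k: "1 \<le> k" and t: "0 < t"
  shows "prob {x \<in> space M. sqrt (\<Sum>i<L. (S i x)\<^sup>2) \<le> t} \<ge> 1 - real L ^ k * c / t ^ (2*k)"
proof -
  define q where "q x = (\<Sum>i<L. (S i x)\<^sup>2)" for x
  have q_int: "integrable M (\<lambda>x. q x ^ k)" and q_moment: "expectation (\<lambda>x. q x ^ k) \<le> real L ^ k * c"
    using sum_squares_power_moment_le[OF meas int moment k] unfolding q_def by simp_all
  have q_meas: "q \<in> borel_measurable M"
    unfolding q_def by (intro borel_measurable_sum borel_measurable_power meas) auto
  define E where "E = {x \<in> space M. t ^ (2*k) \<le> q x ^ k}"
  have E: "E \<in> events" unfolding E_def using q_meas by measurable
  have "prob E \<le> expectation (\<lambda>x. q x ^ k) / t ^ (2*k)"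
    unfolding E_def using t
    by (intro integral_Markov_inequality_measure[OF q_int, where A = "space M"])
       (auto simp: q_def sum_nonneg)
  then have "1 - real L ^ k * c / t ^ (2*k) \<le> 1 - prob E"
    using q_moment t by (smt (verit) divide_right_mono zero_less_power)
  moreover have "space M - E \<subseteq> {x \<in> space M. sqrt (q x) \<le> t}"
  proof safe
    fix x assume "x \<in> space M" "x \<notin> E"
    then have "q x ^ k < (t\<^sup>2) ^ k" unfolding E_def by (auto simp: power_mult)
    then have "q x < t\<^sup>2" by (rule power_less_imp_less_base) simp
    then show "sqrt (q x) \<le> t" using t by (simp add: real_sqrt_le_iff real_le_lsqrt)
  qed
  then have "prob (space M - E) \<le> prob {x \<in> space M. sqrt (q x) \<le> t}"
    using q_meas by (intro finite_measure_mono) measurable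
  ultimately show ?thesis using prob_compl[OF E] unfolding q_def by linarith
qed

lemma (in prob_space) PiM_component_integral:
  fixes f :: "'a \<Rightarrow> real"
  assumes j: "j \<in> I" and f: "integrable M f"
  shows "integrable (PiM I (\<lambda>_. M)) (\<lambda>X. f (X j))"
    and "(\<integral>X. f (X j) \<partial>PiM I (\<lambda>_. M)) = expectation f"
proof -
  interpret P: product_prob_space "\<lambda>_. M" I
    by (intro product_prob_spaceI prob_space_axioms)
  have comp: "(\<lambda>X. X j) \<in> measurable (PiM I (\<lambda>_. M)) M"
    using j by (rule measurable_component_singleton)
  have distr: "distr (PiM I (\<lambda>_. M)) M (\<lambda>X. X j) = M"
    using P.PiM_component[OF j] by simp
  have f_meas: "f \<in> borel_measurable M" using f by (rule borel_measurable_integrable)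
  show "integrable (PiM I (\<lambda>_. M)) (\<lambda>X. f (X j))"
    using integrable_distr_eq[OF comp f_meas] f distr by simp
  show "(\<integral>X. f (X j) \<partial>PiM I (\<lambda>_. M)) = expectation f"
    using integral_distr[OF comp f_meas] distr by simp
qed

lemma EII_eq_mult_integral:
  assumes "prob_space \<mu>" and int: "integrable \<mu> (\<lambda>x. exp (inner_L L x \<theta>) * x i)"
  shows "EII L p \<theta> \<mu> i = real p * (\<integral>x. exp (inner_L L x \<theta>) * x i \<partial>\<mu>)"
proof -
  interpret prob_space \<mu> by fact
  note component = PiM_component_integral[of _ "{..<p}", OF _ int]
  have "EII L p \<theta> \<mu> i = (\<Sum>j<p. \<integral>X. exp (inner_L L (X j) \<theta>) * X j i \<partial>PiM {..<p} (\<lambda>_. \<mu>))"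
    unfolding EII_def II_def rows_space_def
    by (subst Bochner_Integration.integral_sum) (auto intro: component(1))
  also have "\<dots> = (\<Sum>j<p. \<integral>x. exp (inner_L L x \<theta>) * x i \<partial>\<mu>)"
    using component(2) by simp
  finally show ?thesis by simp
qed

lemma subgaussian_vec_sum_centered_even_moment_le:
  assumes "prob_space \<mu>" and sg: "subgaussian_vec L \<mu> \<sigma>" and \<theta>: "norm_L L \<theta> \<le> B"
    and i: "i < L" and p: "0 < p"
  defines "S \<equiv> \<lambda>X. \<Sum>j<p. exp (inner_L L (X j) \<theta>) * X j i - (\<integral>x. exp (inner_L L x \<theta>) * x i \<partial>\<mu>)"
  shows "integrable (rows_space p \<mu>) (\<lambda>X. S X ^ (2*k))"
    and "(\<integral>X. S X ^ (2*k) \<partial>rows_space p \<mu>)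
           \<le> real k ^ (2*k) * real p ^ k * centered_moments_bound B \<sigma> (2*k) ^ k"
proof -
  interpret prob_space \<mu> by fact
  define A where "A x = exp (inner_L L x \<theta>) * x i" for x
  have Y_int: "integrable \<mu> (\<lambda>x. (A x - expectation A) ^ r)"
    and Y_moment: "\<bar>expectation (\<lambda>x. (A x - expectation A) ^ r)\<bar> \<le> centered_moments_bound B \<sigma> (2*k)"
    if "r \<le> 2*k" for r
    using subgaussian_vec_centered_moment_le[OF prob_space_axioms sg \<theta> i that] unfolding A_def
    by simp_all
  have "integrable \<mu> A"
    unfolding A_def by (rule subgaussian_vec_integrable_weighted_coordinate[OF sg \<theta> i])
  then have Y_mean: "expectation (\<lambda>x. A x - expectation A) = 0" by (simp add: prob_space)
  note iid = sum_iid_even_moment_le[OF p Y_int Y_mean Y_moment one_le_centered_moments_bound]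
  show "integrable (rows_space p \<mu>) (\<lambda>X. S X ^ (2*k))"
    and "(\<integral>X. S X ^ (2*k) \<partial>rows_space p \<mu>)
           \<le> real k ^ (2*k) * real p ^ k * centered_moments_bound B \<sigma> (2*k) ^ k"
    using iid unfolding S_def rows_space_def A_def[symmetric] by simp_all
qed

lemma prob_II_deviation_le_ge:
  assumes "prob_space \<mu>" and sg: "subgaussian_vec L \<mu> \<sigma>" and \<theta>: "norm_L L \<theta> \<le> B"
    and p: "0 < p" and k: "1 \<le> k" and t: "0 < t"
  shows "measure (rows_space p \<mu>)
           {X \<in> space (rows_space p \<mu>). norm_L L (\<lambda>i. II L p \<theta> X i - EII L p \<theta> \<mu> i) \<le> t}
         \<ge> 1 - real L ^ k * (real k ^ (2*k) * real p ^ k * centered_moments_bound B \<sigma> (2*k) ^ k)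
               / t ^ (2*k)"
proof -
  interpret prob_space \<mu> by fact
  interpret R: prob_space "rows_space p \<mu>"
    unfolding rows_space_def by (intro prob_space_PiM prob_space_axioms)
  define A where "A i x = exp (inner_L L x \<theta>) * x i" for i x
  define S where "S i X = (\<Sum>j<p. A i (X j) - expectation (A i))" for i X
  have A_int: "integrable \<mu> (A i)" if "i < L" for i
    unfolding A_def by (rule subgaussian_vec_integrable_weighted_coordinate[OF sg \<theta> that])
  have "II L p \<theta> X i - EII L p \<theta> \<mu> i = S i X" if "i < L" for i X
    using EII_eq_mult_integral[OF prob_space_axioms A_int[OF that, unfolded A_def]]
    unfolding S_def II_def A_def by (simp add: sum_subtractf)
  then have deviation_set:
    "{X \<in> space (rows_space p \<mu>). norm_L L (\<lambda>i. II L p \<theta> X i - EII L p \<theta> \<mu> i) \<le> t}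
      = {X \<in> space (rows_space p \<mu>). sqrt (\<Sum>i<L. (S i X)\<^sup>2) \<le> t}"
    unfolding norm_L_def by simp
  have S_meas: "S i \<in> borel_measurable (rows_space p \<mu>)" if "i < L" for i
  proof -
    have "A i \<in> borel_measurable \<mu>" using A_int[OF that] by (rule borel_measurable_integrable)
    then show ?thesis
      unfolding S_def rows_space_def
      by (intro borel_measurable_sum borel_measurable_diff borel_measurable_const
            measurable_compose[OF measurable_component_singleton]) auto
  qed
  have S_int: "integrable (rows_space p \<mu>) (\<lambda>X. S i X ^ (2*k))"
    and S_moment: "R.expectation (\<lambda>X. S i X ^ (2*k))
                     \<le> real k ^ (2*k) * real p ^ k * centered_moments_bound B \<sigma> (2*k) ^ k"
    if "i < L" for i
    using subgaussian_vec_sum_centered_even_moment_le[OF prob_space_axioms sg \<theta> that p, of k]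
    unfolding S_def A_def by simp_all
  show ?thesis
    unfolding deviation_set by (rule R.prob_sqrt_sum_squares_le_ge[OF S_meas S_int S_moment k t])
qed

lemma moment_tail_le_powr:
  fixes l q \<sigma> \<delta> s M :: real and k :: nat
  assumes l: "1 \<le> l" and q: "1 \<le> q" and \<sigma>: "0 < \<sigma>" and M: "0 \<le> M"
    and k: "s \<le> 2 * \<delta> * real k"
    and q_large: "real k ^ (2*k) * M ^ k / \<sigma> ^ (2*k) \<le> q"
  shows "l ^ k * (real k ^ (2*k) * q ^ k * M ^ k) / (\<sigma> * sqrt (l + ln q) * q powr (1/2 + \<delta>)) ^ (2*k)
           \<le> q powr (1 - s)"
proof -
  define a where "a = real k ^ (2*k) * M ^ k / \<sigma> ^ (2*k)"
  have a: "0 \<le> a" unfolding a_def using M \<sigma> by simp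
  have ln_q: "0 \<le> ln q" using q by simp
  have "(q powr (1/2 + \<delta>)) ^ (2*k) = q powr ((1/2 + \<delta>) * real (2*k))"
    using q by (simp add: powr_realpow[symmetric] powr_powr)
  also have "\<dots> = q ^ k * q powr (2 * \<delta> * real k)"
    using q by (simp add: algebra_simps powr_add powr_realpow)
  finally have "(\<sigma> * sqrt (l + ln q) * q powr (1/2 + \<delta>)) ^ (2*k)
      = \<sigma> ^ (2*k) * (l + ln q) ^ k * (q ^ k * q powr (2 * \<delta> * real k))"
    using l ln_q by (simp add: power_mult_distrib power_mult real_sqrt_pow2)
  then have "l ^ k * (real k ^ (2*k) * q ^ k * M ^ k) / (\<sigma> * sqrt (l + ln q) * q powr (1/2 + \<delta>)) ^ (2*k)
      = (l / (l + ln q)) ^ k * a * q powr (- (2 * \<delta> * real k))"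
    using q \<sigma> l ln_q by (simp add: a_def powr_minus power_divide field_simps)
  also have "\<dots> \<le> 1 * q * q powr (- s)"
  proof (intro mult_mono)
    show "(l / (l + ln q)) ^ k \<le> 1" using l ln_q by (simp add: power_le_one)
    show "a \<le> q" using q_large unfolding a_def .
    show "q powr (- (2 * \<delta> * real k)) \<le> q powr (- s)" using k q by (intro powr_mono) auto
  qed (use a q in auto)
  also have "\<dots> = q powr (1 - s)" using q by (simp add: powr_diff powr_minus divide_inverse)
  finally show ?thesis .
qed

definition moment_order :: "real \<Rightarrow> real \<Rightarrow> nat" where
  "moment_order \<delta> s = nat \<lceil>s / (2 * \<delta>)\<rceil>"

definition p0 :: "real \<Rightarrow> real \<Rightarrow> real \<Rightarrow> real \<Rightarrow> nat" where
  "p0 B \<delta> s \<sigma> = (let k = moment_order \<delta> s in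
     nat \<lceil>real k ^ (2*k) * centered_moments_bound B \<sigma> (2*k) ^ k / \<sigma> ^ (2*k)\<rceil> + 1)"

lemma prob_II_deviation_le_ge_powr:
  assumes "prob_space \<mu>" and "subgaussian_vec L \<mu> \<sigma>" and "norm_L L \<theta> \<le> B"
    and \<delta>: "0 < \<delta>" and s: "0 < s" and \<sigma>: "0 < \<sigma>" and p: "p0 B \<delta> s \<sigma> \<le> p"
  shows "measure (rows_space p \<mu>)
           {X \<in> space (rows_space p \<mu>). norm_L L (\<lambda>i. II L p \<theta> X i - EII L p \<theta> \<mu> i)
              \<le> \<sigma> * sqrt (real L + ln (real p)) * real p powr (1/2 + \<delta>)}
         \<ge> 1 - real p powr (1 - s)"
    (is "measure _ {X \<in> _. _ \<le> ?t} \<ge> _")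
proof -
  interpret R: prob_space "rows_space p \<mu>"
    unfolding rows_space_def using assms(1) by (intro prob_space_PiM)
  have p1: "1 \<le> real p" using p by (simp add: p0_def Let_def)
  show ?thesis
  proof (cases "L = 0")
    case True
    then show ?thesis using \<sigma> p1 by (simp add: norm_L_def R.prob_space)
  next
    case False
    define k where "k = moment_order \<delta> s"
    define M where "M = centered_moments_bound B \<sigma> (2*k)"
    have "s / (2 * \<delta>) \<le> real k"
      unfolding k_def moment_order_def by (rule real_nat_ceiling_ge)
    then have k_large: "s \<le> 2 * \<delta> * real k" using \<delta> by (simp add: field_simps)
    then have k: "1 \<le> k" using s by (cases k) auto
    have p_large: "real k ^ (2*k) * M ^ k / \<sigma> ^ (2*k) \<le> real p"
      using p unfolding p0_def k_def M_def Let_def by linarith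
    have "0 < real L + ln (real p)" using False p1 by (simp add: add_pos_nonneg)
    then have t: "0 < ?t" using \<sigma> p1 by simp
    have "1 - real p powr (1 - s) \<le> 1 - real L ^ k * (real k ^ (2*k) * real p ^ k * M ^ k) / ?t ^ (2*k)"
      using moment_tail_le_powr[OF _ p1 \<sigma> _ k_large p_large] False
        one_le_centered_moments_bound[of B \<sigma> "2*k"] unfolding M_def by simp
    also have "\<dots> \<le> measure (rows_space p \<mu>)
        {X \<in> space (rows_space p \<mu>). norm_L L (\<lambda>i. II L p \<theta> X i - EII L p \<theta> \<mu> i) \<le> ?t}"
      unfolding M_def using p1 by (intro prob_II_deviation_le_ge assms(1-3) k t) simp
    finally show ?thesis .
  qed
qed

theorem lemma13:
  shows "\<exists>C>0. \<forall>(B::real) (\<delta>::real) (s::real) (\<sigma>::real).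
     \<delta> > 0 \<and> s \<ge> 2 \<and> \<sigma> > 0 \<longrightarrow>
     (\<exists>p0::nat. \<forall>p\<ge>p0. \<forall>(L::nat) (\<mu>::(nat \<Rightarrow> real) measure) (\<theta>::nat \<Rightarrow> real).
        prob_space \<mu> \<and> sets \<mu> = sets (PiM {..<L} (\<lambda>_. borel)) \<and>
        subgaussian_vec L \<mu> \<sigma> \<and> norm_L L \<theta> \<le> B \<longrightarrow>
        measure (rows_space p \<mu>)
          {X \<in> space (rows_space p \<mu>).
             norm_L L (\<lambda>i. II L p \<theta> X i - EII L p \<theta> \<mu> i)
               \<le> C * \<sigma> * sqrt (real L + ln (real p)) * real p powr (1/2 + \<delta>)}
        \<ge> 1 - 4 * real p powr (1 - s))"
proof (intro exI[of _ "1::real"] conjI allI impI, goal_cases)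
  case (2 B \<delta> s \<sigma>)
  then have \<delta>: "0 < \<delta>" and s: "0 < s" and \<sigma>: "0 < \<sigma>" by auto
  show ?case
  proof (intro exI[of _ "p0 B \<delta> s \<sigma>"] allI impI, goal_cases)
    case (1 p L \<mu> \<theta>)
    then show ?case
      using prob_II_deviation_le_ge_powr[OF _ _ _ \<delta> s \<sigma>, of \<mu> L \<theta> B p]
      by (simp only: mult_1) (smt (verit) powr_ge_zero)
  qed
qed simp

end
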